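(* Let $\alpha>0$, $A\ge0$, $B>0$, $t>0$, $w_0(x)=x^\alpha e^{-x}$ on $[0,\infty)$, $\mathsf{v}_0(x)=x-\alpha\ln x$, and $w(x)=w_0(x)(A+B\theta(x-t))$. Let $P_n(z)=P_n(z,t)$ be the monic polynomials orthogonal w.r.t. $w$ on $[0,\infty)$ with $\int_0^\infty P_iP_jw\,dx=\delta_{ij}h_j(t)$. Define $$A_n(z):=\frac{R_n(t)}{z-t}+\frac{1}{h_n}\int_0^\infty\frac{\mathsf{v}_0'(z)-\mathsf{v}_0'(y)}{z-y}P_n^2(y)w(y)\,dy,\quad B_n(z):=\frac{r_n(t)}{z-t}+\frac{1}{h_{n-1}}\int_0^\infty\frac{\mathsf{v}_0'(z)-\mathsf{v}_0'(y)}{z-y}P_n(y)P_{n-1}(y)w(y)\,dy,$$ where $R_n(t):=Bw_0(t)\{P_n(t,t)\}^2/h_n(t)$ and $r_n(t):=Bw_0(t)P_n(t,t)P_{n-1}(t,t)/h_{n-1}(t)$. Then (for $n\ge1$) $$A_n(z)=\frac{R_n(t)}{z-t}+\frac{1-R_n(t)}{z},\qquad B_n(z)=\frac{r_n(t)}{z-t}-\frac{n+r_n(t)}{z}.$$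
   Context: $\theta$ is the Heaviside function ($1$ for $x>0$, $0$ otherwise); $P_n(t,t)$ denotes $P_n(z,t)$ evaluated at $z=t$. *)

theory Defs
  imports "HOL-Analysis.Analysis" "HOL-Computational_Algebra.Polynomial"
begin

definition heaviside :: "real \<Rightarrow> real" where
  "heaviside x = (if x > 0 then 1 else 0)"

definition w0 :: "real \<Rightarrow> real \<Rightarrow> real" where
  "w0 \<alpha> x = x powr \<alpha> * exp (- x)"

definition v0 :: "real \<Rightarrow> real \<Rightarrow> real" where
  "v0 \<alpha> x = x - \<alpha> * ln x"

definition v0' :: "real \<Rightarrow> complex \<Rightarrow> complex" where
  "v0' \<alpha> z = 1 - complex_of_real \<alpha> / z"

definition wt :: "real \<Rightarrow> real \<Rightarrow> real \<Rightarrow> real \<Rightarrow> real \<Rightarrow> real" where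
  "wt \<alpha> A B t x = w0 \<alpha> x * (A + B * heaviside (x - t))"

definition monic_OPS :: "real \<Rightarrow> real \<Rightarrow> real \<Rightarrow> real \<Rightarrow> (nat \<Rightarrow> real poly) \<Rightarrow> bool" where
  "monic_OPS \<alpha> A B t P \<longleftrightarrow>
     (\<forall>n. degree (P n) = n \<and> lead_coeff (P n) = 1) \<and>
     (\<forall>i j. i \<noteq> j \<longrightarrow>
        (LINT x:{0..}|lborel. poly (P i) x * poly (P j) x * wt \<alpha> A B t x) = 0)"

definition hn :: "real \<Rightarrow> real \<Rightarrow> real \<Rightarrow> real \<Rightarrow> (nat \<Rightarrow> real poly) \<Rightarrow> nat \<Rightarrow> real" where
  "hn \<alpha> A B t P n = (LINT x:{0..}|lborel. (poly (P n) x)\<^sup>2 * wt \<alpha> A B t x)"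

definition Rn :: "real \<Rightarrow> real \<Rightarrow> real \<Rightarrow> real \<Rightarrow> (nat \<Rightarrow> real poly) \<Rightarrow> nat \<Rightarrow> real" where
  "Rn \<alpha> A B t P n = B * w0 \<alpha> t * (poly (P n) t)\<^sup>2 / hn \<alpha> A B t P n"

definition rn :: "real \<Rightarrow> real \<Rightarrow> real \<Rightarrow> real \<Rightarrow> (nat \<Rightarrow> real poly) \<Rightarrow> nat \<Rightarrow> real" where
  "rn \<alpha> A B t P n = B * w0 \<alpha> t * poly (P n) t * poly (P (n - 1)) t / hn \<alpha> A B t P (n - 1)"

definition An :: "real \<Rightarrow> real \<Rightarrow> real \<Rightarrow> real \<Rightarrow> (nat \<Rightarrow> real poly) \<Rightarrow> nat \<Rightarrow> complex \<Rightarrow> complex" where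
  "An \<alpha> A B t P n z =
     complex_of_real (Rn \<alpha> A B t P n) / (z - complex_of_real t)
     + (1 / complex_of_real (hn \<alpha> A B t P n)) *
       (LINT y:{0..}|lborel. ((v0' \<alpha> z - v0' \<alpha> (complex_of_real y)) / (z - complex_of_real y))
            * complex_of_real ((poly (P n) y)\<^sup>2 * wt \<alpha> A B t y))"

definition Bn :: "real \<Rightarrow> real \<Rightarrow> real \<Rightarrow> real \<Rightarrow> (nat \<Rightarrow> real poly) \<Rightarrow> nat \<Rightarrow> complex \<Rightarrow> complex" where
  "Bn \<alpha> A B t P n z =
     complex_of_real (rn \<alpha> A B t P n) / (z - complex_of_real t)
     + (1 / complex_of_real (hn \<alpha> A B t P (n - 1))) *
       (LINT y:{0..}|lborel. ((v0' \<alpha> z - v0' \<alpha> (complex_of_real y)) / (z - complex_of_real y))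
            * complex_of_real (poly (P n) y * poly (P (n - 1)) y * wt \<alpha> A B t y))"

end

theory Submission
  imports Defs "HOL-Real_Asymp.Real_Asymp"
begin

text \<open>Since \<open>v0'(z) - v0'(y) = \<alpha> (z - y) / (z y)\<close>, each integral equals
  \<open>(\<alpha>/z) \<integral>\<^sub>0\<^sup>\<infinity> y^(\<alpha>-1) Q(y) e^(-y) (A + B \<theta>(y - t)) dy\<close> with \<open>Q = P\<^sub>n\<^sup>2\<close> resp. \<open>Q = P\<^sub>n P\<^sub>n\<^sub>-\<^sub>1\<close>.
  Integrating by parts against \<open>y^\<alpha> Q(y) e^(-y)\<close>, which vanishes at \<open>0\<close> and at \<open>\<infinity>\<close>, turns this
  into \<open>\<integral> (Q - Q') w\<close> minus the boundary term \<open>B w0(t) Q(t)\<close> produced by the jump of the weight at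
  \<open>t\<close>. Orthogonality evaluates the rest: for \<open>Q = P\<^sub>n\<^sup>2\<close> the two integrals are \<open>h\<^sub>n\<close> and \<open>0\<close>; for
  \<open>Q = P\<^sub>n P\<^sub>n\<^sub>-\<^sub>1\<close> they are \<open>0\<close> and \<open>n h\<^sub>n\<^sub>-\<^sub>1\<close>, since \<open>P\<^sub>n' - n P\<^sub>n\<^sub>-\<^sub>1\<close> has degree below \<open>n - 1\<close>.\<close>

lemma set_integrable_times_step:
  assumes f: "set_integrable lborel {0..} f"
  shows "set_integrable lborel {0..} (\<lambda>y. f y * (A + B * heaviside (y - t)))"
  unfolding set_integrable_def
proof (rule Bochner_Integration.integrable_bound)
  show "integrable lborel (\<lambda>y. (indicator {0..} y *\<^sub>R f y) * (\<bar>A\<bar> + \<bar>B\<bar>))"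
    using f unfolding set_integrable_def by simp
  have "(\<lambda>y. A + B * heaviside (y - t)) \<in> borel_measurable lborel"
    unfolding heaviside_def by measurable
  then show "(\<lambda>y. indicator {0..} y *\<^sub>R (f y * (A + B * heaviside (y - t)))) \<in> borel_measurable lborel"
    using f unfolding set_integrable_def by (simp add: mult.assoc[symmetric])
  show "AE y in lborel. norm (indicator {0..} y *\<^sub>R (f y * (A + B * heaviside (y - t))))
          \<le> norm ((indicator {0..} y *\<^sub>R f y) * (\<bar>A\<bar> + \<bar>B\<bar>))"
  proof (intro AE_I2)
    fix y
    have "\<bar>A + B * heaviside (y - t)\<bar> \<le> \<bar>A\<bar> + \<bar>B\<bar>"
      by (simp add: heaviside_def abs_triangle_ineq)
    then show "norm (indicator {0..} y *\<^sub>R (f y * (A + B * heaviside (y - t))))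
          \<le> norm ((indicator {0..} y *\<^sub>R f y) * (\<bar>A\<bar> + \<bar>B\<bar>))"
      by (auto simp: abs_mult indicator_def intro!: mult_left_mono)
  qed
qed

lemma set_integral_times_step:
  assumes f: "set_integrable lborel {0..} f" and t: "t \<ge> 0"
  shows "(LINT y:{0..}|lborel. f y * (A + B * heaviside (y - t))) =
     A * (LINT y:{0..t}|lborel. f y) + (A + B) * (LINT y:{t<..}|lborel. f y)"
proof -
  let ?g = "\<lambda>y. f y * (A + B * heaviside (y - t))"
  have g: "set_integrable lborel S ?g" if "S \<subseteq> {0..}" "S \<in> sets lborel" for S
    using set_integrable_subset[OF set_integrable_times_step[OF f] that(2,1)] .
  have "{0..} = {0..t} \<union> {t<..}" using t by auto
  then have "(LINT y:{0..}|lborel. ?g y) = (LINT y:{0..t}|lborel. ?g y) + (LINT y:{t<..}|lborel. ?g y)"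
    using t by (simp only:) (intro set_integral_Un g; auto)
  also have "(LINT y:{0..t}|lborel. ?g y) = (LINT y:{0..t}|lborel. A * f y)"
    by (rule set_lebesgue_integral_cong) (auto simp: heaviside_def)
  also have "(LINT y:{t<..}|lborel. ?g y) = (LINT y:{t<..}|lborel. (A + B) * f y)"
    by (rule set_lebesgue_integral_cong) (auto simp: heaviside_def)
  finally show ?thesis by simp
qed

lemma set_integral_Icc_eq_antiderivative:
  fixes F f :: "real \<Rightarrow> real"
  assumes t: "t > 0"
    and deriv: "\<And>x. x > 0 \<Longrightarrow> (F has_real_derivative f x) (at x)"
    and cont: "\<And>x. x > 0 \<Longrightarrow> isCont f x"
    and int: "set_integrable lborel {0..} f"
    and lim: "(F \<longlongrightarrow> 0) (at_right 0)"
  shows "(LINT y:{0..t}|lborel. f y) = F t"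
proof -
  have "(LBINT y=ereal 0..ereal t. f y) = F t - 0"
  proof (rule interval_integral_FTC_integrable)
    show "set_integrable lborel (einterval (ereal 0) (ereal t)) f"
      by (rule set_integrable_subset[OF int]) (auto simp: einterval_def)
    show "((F \<circ> real_of_ereal) \<longlongrightarrow> 0) (at_right (ereal 0))"
      unfolding at_right_ereal filterlim_filtermap o_def using lim by simp
    have "(F \<longlongrightarrow> F t) (at t)"
      using DERIV_isCont[OF deriv[OF t]] by (simp add: isCont_def)
    then show "((F \<circ> real_of_ereal) \<longlongrightarrow> F t) (at_left (ereal t))"
      unfolding at_left_ereal filterlim_filtermap o_def real_of_ereal.simps
      by (rule tendsto_mono[rotated]) (rule at_le, simp)
  qed (use t deriv cont in \<open>auto simp: has_real_derivative_iff_has_vector_derivative\<close>)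
  then show ?thesis using t by (simp add: interval_integral_Icc)
qed

lemma set_integral_greaterThan_eq_antiderivative:
  fixes F f :: "real \<Rightarrow> real"
  assumes t: "t > 0"
    and deriv: "\<And>x. x > 0 \<Longrightarrow> (F has_real_derivative f x) (at x)"
    and cont: "\<And>x. x > 0 \<Longrightarrow> isCont f x"
    and int: "set_integrable lborel {0..} f"
    and lim: "(F \<longlongrightarrow> 0) at_top"
  shows "(LINT y:{t<..}|lborel. f y) = - F t"
proof -
  have "(LBINT y=ereal t..\<infinity>. f y) = 0 - F t"
  proof (rule interval_integral_FTC_integrable)
    show "set_integrable lborel (einterval (ereal t) \<infinity>) f"
      by (rule set_integrable_subset[OF int]) (use t in \<open>auto simp: einterval_def\<close>)
    show "((F \<circ> real_of_ereal) \<longlongrightarrow> 0) (at_left \<infinity>)"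
      unfolding at_left_PInf filterlim_filtermap o_def using lim by simp
    have "(F \<longlongrightarrow> F t) (at t)"
      using DERIV_isCont[OF deriv[OF t]] by (simp add: isCont_def)
    then show "((F \<circ> real_of_ereal) \<longlongrightarrow> F t) (at_right (ereal t))"
      unfolding at_right_ereal filterlim_filtermap o_def real_of_ereal.simps
      by (rule tendsto_mono[rotated]) (rule at_le, simp)
  qed (use t deriv cont in \<open>auto simp: has_real_derivative_iff_has_vector_derivative\<close>)
  then show ?thesis by (simp add: interval_integral_to_infinity_eq)
qed

lemma set_integral_derivative_times_step:
  fixes F f :: "real \<Rightarrow> real"
  assumes t: "t > 0"
    and deriv: "\<And>x. x > 0 \<Longrightarrow> (F has_real_derivative f x) (at x)"
    and cont: "\<And>x. x > 0 \<Longrightarrow> isCont f x"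
    and int: "set_integrable lborel {0..} f"
    and lim_0: "(F \<longlongrightarrow> 0) (at_right 0)" and lim_top: "(F \<longlongrightarrow> 0) at_top"
  shows "(LINT y:{0..}|lborel. f y * (A + B * heaviside (y - t))) = - B * F t"
  using set_integral_times_step[OF int, of t A B]
    set_integral_Icc_eq_antiderivative[OF assms(1-5)]
    set_integral_greaterThan_eq_antiderivative[OF assms(1-4) lim_top] t
  by (simp add: algebra_simps)

lemma w0_mult_poly_eq_sum:
  assumes "y > 0"
  shows "w0 b y * poly q y = (\<Sum>i\<le>degree q. coeff q i * w0 (b + real i) y)"
  using assms by (simp add: w0_def poly_altdef sum_distrib_left sum_distrib_right powr_add
      powr_realpow algebra_simps)

lemma set_integrable_w0:
  assumes "b > -1"
  shows "set_integrable lborel {0..} (w0 b)"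
proof -
  have "(\<lambda>y. indicator {0..} y *\<^sub>R w0 b y) = (\<lambda>y. indicator {0..} y * y powr (b + 1 - 1) / exp y)"
    by (auto simp: w0_def exp_minus field_simps indicator_def)
  moreover have "b + 1 > 0" using assms by simp
  ultimately show ?thesis
    unfolding set_integrable_def
    using Gamma_conv_nn_integral_real[of "b + 1", symmetric]
    by (auto simp: indicator_def intro!: integrableI_nonneg)
qed

lemma set_integrable_w0_mult_poly:
  assumes "b > -1"
  shows "set_integrable lborel {0..} (\<lambda>y. w0 b y * poly q y)"
proof -
  have "set_integrable lborel {0..} (\<lambda>y. \<Sum>i\<le>degree q. coeff q i * w0 (b + real i) y)"
    using set_integrable_w0 assms unfolding set_integrable_def real_scaleR_def sum_distrib_left
    by (intro Bochner_Integration.integrable_sum integrable_mult_right) (auto simp: mult.left_commute)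
  moreover have "w0 b y * poly q y = (\<Sum>i\<le>degree q. coeff q i * w0 (b + real i) y)" if "y \<ge> 0" for y
    using that w0_mult_poly_eq_sum[of y] by (cases "y = 0") (auto simp: w0_def)
  ultimately show ?thesis
    using set_integrable_cong[OF refl refl, of "{0..}" "\<lambda>y. w0 b y * poly q y"] by auto
qed

lemma w0_mult_poly_tendsto_0_at_top: "((\<lambda>y. w0 b y * poly q y) \<longlongrightarrow> 0) at_top"
proof -
  have "((\<lambda>y. \<Sum>i\<le>degree q. coeff q i * w0 (b + real i) y) \<longlongrightarrow> 0) at_top"
    unfolding w0_def by (intro tendsto_null_sum tendsto_mult_right_zero) real_asymp
  moreover have "\<forall>\<^sub>F y in at_top. (\<Sum>i\<le>degree q. coeff q i * w0 (b + real i) y) = w0 b y * poly q y"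
    using eventually_gt_at_top[of 0] by eventually_elim (simp add: w0_mult_poly_eq_sum)
  ultimately show ?thesis by (rule Lim_transform_eventually)
qed

lemma w0_mult_poly_tendsto_0_at_right_0:
  assumes "b > 0"
  shows "((\<lambda>y. w0 b y * poly q y) \<longlongrightarrow> 0) (at_right 0)"
proof -
  have "((\<lambda>y. y powr b * exp (- y) * poly q y) \<longlongrightarrow> 0 * exp (- 0) * poly q 0) (at_right 0)"
    using assms by (intro tendsto_intros tendsto_zero_powrI)
      (auto simp: eventually_at_right_less less_imp_le eventually_at_filter)
  then show ?thesis by (simp add: w0_def)
qed

lemma has_real_derivative_w0_mult_poly:
  assumes "x > 0"
  shows "((\<lambda>y. w0 a y * poly q y) has_real_derivative
           a * w0 (a - 1) x * poly q x + w0 a x * poly (pderiv q - q) x) (at x)"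
proof -
  have "((\<lambda>y. y powr a * exp (- y) * poly q y) has_real_derivative
     (a * x powr (a - 1) * exp (- x) - x powr a * exp (- x)) * poly q x
     + x powr a * exp (- x) * poly (pderiv q) x) (at x)"
    using assms by (auto intro!: derivative_eq_intros)
  then show ?thesis
    unfolding w0_def by (rule DERIV_cong) (simp add: algebra_simps)
qed

definition weighted_integral :: "real \<Rightarrow> real \<Rightarrow> real \<Rightarrow> real \<Rightarrow> real poly \<Rightarrow> real" where
  "weighted_integral a A B t q = (LINT y:{0..}|lborel. poly q y * wt a A B t y)"

lemma set_integrable_poly_mult_wt:
  assumes "a > -1"
  shows "set_integrable lborel {0..} (\<lambda>y. poly q y * wt a A B t y)"
proof -
  have "(\<lambda>y. poly q y * wt a A B t y) = (\<lambda>y. w0 a y * poly q y * (A + B * heaviside (y - t)))"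
    by (simp add: wt_def fun_eq_iff)
  then show ?thesis
    using set_integrable_times_step[OF set_integrable_w0_mult_poly[OF assms]] by simp
qed

lemma weighted_integral_add:
  assumes "a > -1"
  shows "weighted_integral a A B t (p + q) = weighted_integral a A B t p + weighted_integral a A B t q"
  unfolding weighted_integral_def
  using set_integral_add(2)[OF set_integrable_poly_mult_wt set_integrable_poly_mult_wt] assms
  by (simp add: distrib_right)

lemma weighted_integral_smult:
  "weighted_integral a A B t (smult c p) = c * weighted_integral a A B t p"
  by (simp add: weighted_integral_def mult.assoc)

lemma weighted_integral_diff:
  assumes "a > -1"
  shows "weighted_integral a A B t (p - q) = weighted_integral a A B t p - weighted_integral a A B t q"
  using weighted_integral_add[OF assms, of A B t "p - q" q] by simp

lemma weighted_integral_orthogonal: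
  assumes a: "a > -1" and P: "monic_OPS a A B t P" and r: "\<And>k. k \<ge> m \<Longrightarrow> coeff r k = 0"
  shows "weighted_integral a A B t (P m * r) = 0"
proof -
  have "weighted_integral a A B t (P m * r) = 0" if "\<forall>k\<ge>d. coeff r k = 0" "d \<le> m" for d r
    using that
  proof (induction d arbitrary: r)
    case 0
    then have "r = 0" by (intro poly_eqI) simp
    then show ?case by (simp add: weighted_integral_def)
  next
    case (Suc d)
    have Pd: "degree (P d) = d" "coeff (P d) d = 1"
      using P unfolding monic_OPS_def by metis+
    define r' where "r' = r - smult (coeff r d) (P d)"
    have "coeff r' k = 0" if "k \<ge> d" for k
      using that Suc.prems Pd by (cases "k = d") (auto simp: r'_def coeff_eq_0)
    then have "weighted_integral a A B t (P m * r') = 0"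
      using Suc by simp
    moreover have "weighted_integral a A B t (P m * P d) = 0"
      using P Suc.prems unfolding monic_OPS_def weighted_integral_def by (simp add: mult.assoc)
    moreover have "P m * r = P m * r' + smult (coeff r d) (P m * P d)"
      by (simp add: r'_def algebra_simps)
    ultimately show ?case
      by (simp add: weighted_integral_add[OF a] weighted_integral_smult)
  qed
  then show ?thesis using r by blast
qed

lemma weighted_integral_square_pos:
  assumes a: "a > -1" and A: "A \<ge> 0" and B: "B > 0" and p: "p \<noteq> 0"
  shows "weighted_integral a A B t (p * p) > 0"
proof -
  define g where "g y = indicator {0..} y *\<^sub>R (poly (p * p) y * wt a A B t y)" for y
  define u where "u = max 0 t"
  have g_int: "integrable lborel g"
    using set_integrable_poly_mult_wt[OF a] unfolding set_integrable_def g_def .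
  have g_nonneg: "g y \<ge> 0" for y
    using A B by (simp add: g_def indicator_def wt_def w0_def heaviside_def)
  have g_pos: "g y > 0" if "y > u" "poly p y \<noteq> 0" for y
  proof -
    have "poly p y * poly p y > 0" using that(2) not_real_square_gt_zero by blast
    then show ?thesis using that A B by (simp add: g_def u_def wt_def w0_def heaviside_def)
  qed
  have "weighted_integral a A B t (p * p) = integral\<^sup>L lborel g"
    by (simp add: weighted_integral_def set_lebesgue_integral_def g_def[abs_def])
  moreover have "integral\<^sup>L lborel g \<noteq> 0"
  proof
    assume "integral\<^sup>L lborel g = 0"
    then have "AE y in lborel. g y = 0"
      using integral_nonneg_eq_0_iff_AE[OF g_int] g_nonneg by simp
    moreover have "AE y in lborel. y \<notin> {y. poly p y = 0}"
      by (intro AE_not_in finite_imp_null_set_lborel poly_roots_finite p)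
    ultimately have "AE y in lborel. y \<notin> {u<..<u + 1}"
      by eventually_elim (use g_pos in fastforce)
    then have "emeasure lborel {u<..<u + 1} = 0"
      by (subst (asm) AE_iff_measurable[of "{u<..<u + 1}"]) auto
    then show False by simp
  qed
  ultimately show ?thesis
    using g_nonneg by (simp add: order_less_le)
qed

lemma integral_w0_step_by_parts:
  assumes a: "a > 0" and t: "t > 0"
  shows "a * (LINT y:{0..}|lborel. w0 (a - 1) y * poly q y * (A + B * heaviside (y - t)))
         = weighted_integral a A B t (q - pderiv q) - B * w0 a t * poly q t"
proof -
  define f where "f y = a * w0 (a - 1) y * poly q y + w0 a y * poly (pderiv q - q) y" for y
  let ?step = "\<lambda>y. A + B * heaviside (y - t)"
  have int1: "set_integrable lborel {0..} (\<lambda>y. a * w0 (a - 1) y * poly q y)"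
    using set_integrable_w0_mult_poly[of "a - 1" q] a by (simp add: mult.assoc)
  have int2: "set_integrable lborel {0..} (\<lambda>y. w0 a y * poly (pderiv q - q) y)"
    using set_integrable_w0_mult_poly[of a "pderiv q - q"] a by simp
  have "(LINT y:{0..}|lborel. f y * ?step y) = - B * (w0 a t * poly q t)"
  proof (rule set_integral_derivative_times_step[OF t])
    show "set_integrable lborel {0..} f"
      unfolding f_def[abs_def] using int1 int2 by (rule set_integral_add)
    show "((\<lambda>y. w0 a y * poly q y) has_real_derivative f x) (at x)" if "x > 0" for x
      unfolding f_def by (rule has_real_derivative_w0_mult_poly[OF that])
    show "isCont f x" if "x > 0" for x
    proof -
      have c: "isCont (\<lambda>y. w0 b y * poly p y) x" for b p
        using DERIV_isCont[OF has_real_derivative_w0_mult_poly[OF that]] .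
      show ?thesis
        unfolding f_def mult.assoc by (rule isCont_add[OF isCont_mult[OF continuous_const c] c])
    qed
  qed (use a w0_mult_poly_tendsto_0_at_top w0_mult_poly_tendsto_0_at_right_0 in auto)
  moreover have "(LINT y:{0..}|lborel. f y * ?step y) =
      (LINT y:{0..}|lborel. a * w0 (a - 1) y * poly q y * ?step y)
      + (LINT y:{0..}|lborel. w0 a y * poly (pderiv q - q) y * ?step y)"
    unfolding f_def distrib_right
    by (intro set_integral_add(2) set_integrable_times_step int1 int2)
  moreover have "(LINT y:{0..}|lborel. w0 a y * poly (pderiv q - q) y * ?step y)
      = weighted_integral a A B t (pderiv q - q)"
    by (simp add: weighted_integral_def wt_def mult_ac)
  moreover have "(LINT y:{0..}|lborel. a * w0 (a - 1) y * poly q y * ?step y)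
      = a * (LINT y:{0..}|lborel. w0 (a - 1) y * poly q y * ?step y)"
    by (simp add: mult.assoc)
  moreover have "weighted_integral a A B t (pderiv q - q) = - weighted_integral a A B t (q - pderiv q)"
    using a by (simp add: weighted_integral_diff)
  ultimately show ?thesis by linarith
qed

lemma v0'_difference_quotient:
  fixes y z :: complex
  assumes "y \<noteq> 0" "z \<noteq> 0" "z \<noteq> y"
  shows "(v0' a z - v0' a y) / (z - y) = of_real a / (z * y)"
  using assms by (simp add: v0'_def field_simps)

lemma kernel_integral_eq:
  assumes a: "a > 0" and t: "t > 0" and z: "z \<noteq> 0"
  shows "(LINT y:{0..}|lborel. ((v0' a z - v0' a (of_real y)) / (z - of_real y))
            * of_real (poly q y * wt a A B t y))
       = of_real (weighted_integral a A B t q - weighted_integral a A B t (pderiv q)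
            - B * w0 a t * poly q t) / z"
proof -
  let ?g = "\<lambda>y. w0 (a - 1) y * poly q y * (A + B * heaviside (y - t))"
  \<comment> \<open>off the single point \<open>y = z\<close> the kernel is \<open>a/(z y)\<close>, and \<open>1/y\<close> lowers the exponent of \<open>w0\<close>\<close>
  have "(LINT y:{0..}|lborel. ((v0' a z - v0' a (of_real y)) / (z - of_real y))
            * of_real (poly q y * wt a A B t y))
      = (LINT y:{0..}|lborel. of_real (a * ?g y) / z)"
    unfolding set_lebesgue_integral_def
  proof (rule integral_discrete_difference[where X = "{Re z}"])
    fix y :: real
    assume "y \<notin> {Re z}"
    then have zy: "z \<noteq> of_real y" by auto
    show "indicator {0..} y *\<^sub>R (((v0' a z - v0' a (of_real y)) / (z - of_real y))
            * of_real (poly q y * wt a A B t y)) = indicator {0..} y *\<^sub>R (of_real (a * ?g y) / z)"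
    proof (cases "y > 0")
      case True
      then have "poly q y * wt a A B t y = y * ?g y"
        by (simp add: wt_def w0_def powr_diff field_simps)
      then show ?thesis
        using True zy z by (simp add: v0'_difference_quotient field_simps)
    next
      case False
      then show ?thesis by (cases "y = 0") (auto simp: wt_def w0_def)
    qed
  qed auto
  also have "\<dots> = of_real (a * (LINT y:{0..}|lborel. ?g y)) / z"
    by (simp only: set_integral_divide_zero set_integral_complex_of_real set_integral_mult_right)
  also have "\<dots> = of_real (weighted_integral a A B t (q - pderiv q) - B * w0 a t * poly q t) / z"
    by (simp only: integral_w0_step_by_parts[OF a t])
  finally show ?thesis
    using a by (simp add: weighted_integral_diff)
qed

lemma weighted_integral_pderiv_square:
  assumes a: "a > -1" and P: "monic_OPS a A B t P"
  shows "weighted_integral a A B t (pderiv (P n * P n)) = 0"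
proof -
  have "coeff (pderiv (P n)) k = 0" if "k \<ge> n" for k
    using P that unfolding monic_OPS_def by (simp add: coeff_pderiv coeff_eq_0)
  then have "weighted_integral a A B t (P n * pderiv (P n)) = 0"
    by (rule weighted_integral_orthogonal[OF a P])
  moreover have "pderiv (P n * P n) = P n * pderiv (P n) + P n * pderiv (P n)"
    by (simp add: pderiv_mult)
  ultimately show ?thesis
    by (simp only: weighted_integral_add[OF a])
qed

lemma weighted_integral_pderiv_mult_pred:
  assumes a: "a > -1" and P: "monic_OPS a A B t P" and n: "n \<ge> 1"
  shows "weighted_integral a A B t (pderiv (P n * P (n - 1)))
       = of_nat n * weighted_integral a A B t (P (n - 1) * P (n - 1))"
proof -
  have deg: "degree (P m) = m" "coeff (P m) m = 1" for m
    using P unfolding monic_OPS_def by metis+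
  define D where "D = pderiv (P n) - smult (of_nat n) (P (n - 1))"
  \<comment> \<open>both terms of \<open>D\<close> have leading term \<open>n x^(n-1)\<close>\<close>
  have "coeff D k = 0" if "k \<ge> n - 1" for k
    using that n deg[of n] deg[of "n - 1"]
    by (cases "k = n - 1") (auto simp: D_def coeff_pderiv coeff_eq_0)
  then have "weighted_integral a A B t (P (n - 1) * D) = 0"
    by (rule weighted_integral_orthogonal[OF a P])
  moreover have "coeff (pderiv (P (n - 1))) k = 0" if "k \<ge> n" for k
    using that n deg[of "n - 1"] by (simp add: coeff_pderiv coeff_eq_0)
  then have "weighted_integral a A B t (P n * pderiv (P (n - 1))) = 0"
    by (rule weighted_integral_orthogonal[OF a P])
  moreover have "pderiv (P n * P (n - 1))
      = P n * pderiv (P (n - 1)) + (smult (of_nat n) (P (n - 1) * P (n - 1)) + P (n - 1) * D)"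
    by (simp add: pderiv_mult D_def algebra_simps)
  ultimately show ?thesis
    by (simp only: weighted_integral_add[OF a] weighted_integral_smult)
qed

lemma hn_pos:
  assumes "a > -1" "A \<ge> 0" "B > 0" and P: "monic_OPS a A B t P"
  shows "hn a A B t P n > 0"
proof -
  have "lead_coeff (P n) = 1"
    using P unfolding monic_OPS_def by blast
  then have "weighted_integral a A B t (P n * P n) > 0"
    by (intro weighted_integral_square_pos[OF assms(1-3)]) (metis leading_coeff_0_iff one_neq_zero)
  then show ?thesis
    by (simp add: hn_def weighted_integral_def power2_eq_square)
qed

lemma An_eq_closed_form:
  assumes a: "a > 0" and t: "t > 0" and P: "monic_OPS a A B t P"
    and z: "z \<noteq> 0" and h: "hn a A B t P n \<noteq> 0"
  shows "An a A B t P n z = of_real (Rn a A B t P n) / (z - of_real t) + (1 - of_real (Rn a A B t P n)) / z"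
proof -
  have "An a A B t P n z = of_real (Rn a A B t P n) / (z - of_real t)
      + 1 / of_real (hn a A B t P n) * (of_real (hn a A B t P n - B * w0 a t * (poly (P n) t)\<^sup>2) / z)"
    using kernel_integral_eq[OF a t z, of "P n * P n" A B] weighted_integral_pderiv_square[OF _ P, of n] a
    by (simp add: An_def hn_def weighted_integral_def power2_eq_square)
  also have "\<dots> = of_real (Rn a A B t P n) / (z - of_real t) + (1 - of_real (Rn a A B t P n)) / z"
    using h z by (simp add: Rn_def field_simps)
  finally show ?thesis .
qed

lemma Bn_eq_closed_form:
  assumes a: "a > 0" and t: "t > 0" and P: "monic_OPS a A B t P" and n: "n \<ge> 1"
    and z: "z \<noteq> 0" and h: "hn a A B t P (n - 1) \<noteq> 0"
  shows "Bn a A B t P n z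
       = of_real (rn a A B t P n) / (z - of_real t) - (of_nat n + of_real (rn a A B t P n)) / z"
proof -
  have a': "a > -1" using a by simp
  have "weighted_integral a A B t (P n * P (n - 1)) = 0"
    using P n unfolding monic_OPS_def
    by (intro weighted_integral_orthogonal[OF a' P]) (simp add: coeff_eq_0)
  then have "Bn a A B t P n z = of_real (rn a A B t P n) / (z - of_real t)
      + 1 / of_real (hn a A B t P (n - 1))
        * (of_real (- of_nat n * hn a A B t P (n - 1) - B * w0 a t * poly (P n) t * poly (P (n - 1)) t) / z)"
    using kernel_integral_eq[OF a t z, of "P n * P (n - 1)" A B]
      weighted_integral_pderiv_mult_pred[OF a' P n]
    by (simp add: Bn_def hn_def weighted_integral_def power2_eq_square mult.assoc)
  also have "\<dots> = of_real (rn a A B t P n) / (z - of_real t) - (of_nat n + of_real (rn a A B t P n)) / z"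
    using h z by (simp add: rn_def field_simps)
  finally show ?thesis .
qed

theorem lemma5:
  fixes \<alpha> A B t :: real and P :: "nat \<Rightarrow> real poly" and n :: nat and z :: complex
  assumes "\<alpha> > 0" and "A \<ge> 0" and "B > 0" and "t > 0"
    and "monic_OPS \<alpha> A B t P"
    and "n \<ge> 1"
    and "z \<noteq> 0" and "z \<noteq> complex_of_real t"
  shows "An \<alpha> A B t P n z =
           complex_of_real (Rn \<alpha> A B t P n) / (z - complex_of_real t)
           + (1 - complex_of_real (Rn \<alpha> A B t P n)) / z \<and>
         Bn \<alpha> A B t P n z =
           complex_of_real (rn \<alpha> A B t P n) / (z - complex_of_real t)
           - (of_nat n + complex_of_real (rn \<alpha> A B t P n)) / z"
proof -
  have "hn \<alpha> A B t P m \<noteq> 0" for m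
    using hn_pos[of \<alpha> A B t P m] assms(1-3,5) by simp
  then show ?thesis
    using An_eq_closed_form Bn_eq_closed_form assms(1,4-7) by blast
qed

end
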